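(* Let $\mathcal X\subseteq\mathbb R^p$, let $\mathcal A=\{a^{(1)},\dots,a^{(d)}\}$ (historical action set) and $\bar{\mathcal A}=\{\bar a^{(1)},\dots,\bar a^{(m)}\}$ (new action set) be finite sets of real actions. Let $(\boldsymbol X_i,A_i,R_i)$, $i=1,\dots,n$, be random tuples with $\boldsymbol X_i\in\mathcal X$, $A_i\in\mathcal A$, $R_i\in\mathbb R$ such that: (i) the tuples are independent; (ii) $\boldsymbol X_1,\dots,\boldsymbol X_n$ are i.i.d., distributed as a generic $\boldsymbol X$; (iii) conditionally on $\boldsymbol X_i$, $A_i$ has distribution $\widetilde\pi_i(\cdot\mid\boldsymbol X_i)$ with $\widetilde\pi_i(a\mid\boldsymbol x)>0$ for all $a\in\mathcal A$, $\boldsymbol x\in\mathcal X$; (iv) the conditional distribution of the reward given features $\boldsymbol x$ and action $a$ does not depend on $i$. For $\boldsymbol x\in\mathcal X$ and $a\in\mathcal A\cup\bar{\mathcal A}$ let $\varrho(\boldsymbol x,a)$ denote the expected reward when action $a$ is taken for a policyholder with features $\boldsymbol x$ (so $\varrho(\boldsymbol x,a)=\mathbb E[R_i\mid\boldsymbol X_i=\boldsymbol x,A_i=a]$ for $a\in\mathcal A$). Let $f_1,\dots,f_q:\mathbb R\to\mathbb R$ and $\boldsymbol f(a)=(1,f_1(a),\dots,f_q(a))^\top$. Let $D\in\mathbb R^{d\times(q+1)}$ have $k$-th row $\boldsymbol f(a^{(k)})^\top$ and $\bar D\in\mathbb R^{m\times(q+1)}$ have $k$-th row $\boldsymbol f(\bar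 a^{(k)})^\top$, and assume $D$ has full column rank $q+1$. Assume the regression assumption: for every $\boldsymbol x\in\mathcal X$ there is $\boldsymbol\beta(\boldsymbol x)\in\mathbb R^{q+1}$ with $\varrho(\boldsymbol x,a)=\boldsymbol f(a)^\top\boldsymbol\beta(\boldsymbol x)$ for all $a\in\mathcal A\cup\bar{\mathcal A}$. For each $i$ let $W_i(\boldsymbol x)\in\mathbb R^{d\times d}$ be symmetric positive definite for every $\boldsymbol x$, and set $\mathbf K_i(\boldsymbol x)=W_i(\boldsymbol x)D\,(D^\top W_i(\boldsymbol x)D)^{-1}\bar D^\top\in\mathbb R^{d\times m}$. For a deterministic policy $\bar\pi:\mathcal X\to\bar{\mathcal A}$ define the kernelized IPS estimator $$\widehat V_{\rm K}(\bar\pi)=\frac1n\sum_{i=1}^n R_i\,\frac{\langle\boldsymbol e_{A_i},\mathbf K_i(\boldsymbol X_i)\,\bar{\boldsymbol e}_{\bar\pi(\boldsymbol X_i)}\rangle}{\widetilde\pi_i(A_i\mid\boldsymbol X_i)}.$$ Then $\widehat V_{\rm K}(\bar\pi)$ is unbiased for $V(\bar\pi)=\mathbb E[\varrho(\boldsymbol X,\bar\pi(\boldsymbol X))]$.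
   Context: $\boldsymbol e_a\in\{0,1\}^d$ denotes the one-hot encoding of $a\in\mathcal A$ (entry $k$ equals $\mathbf 1_{\{a=a^{(k)}\}}$), and $\bar{\boldsymbol e}_{\bar a}\in\{0,1\}^m$ the one-hot encoding of $\bar a\in\bar{\mathcal A}$. $V(\bar\pi)$ is the value of $\bar\pi$, i.e. the expected reward when actions are chosen by $\bar\pi$. All expectations appearing are assumed finite. *)

theory Defs
  imports "HOL-Analysis.Analysis" "HOL-Probability.Probability"
begin

definition onehot :: "('d::finite \<Rightarrow> real) \<Rightarrow> real \<Rightarrow> real^'d" where
  "onehot act a = (\<chi> k. if a = act k then 1 else 0)"

definition design :: "(real \<Rightarrow> real^'k) \<Rightarrow> ('d::finite \<Rightarrow> real) \<Rightarrow> real^'k^'d" where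
  "design f act = (\<chi> k. f (act k))"

definition sym_posdef :: "real^'d^'d \<Rightarrow> bool" where
  "sym_posdef W \<longleftrightarrow> transpose W = W \<and> (\<forall>v. v \<noteq> 0 \<longrightarrow> v \<bullet> (W *v v) > 0)"

definition Kmat :: "real^'d^'d \<Rightarrow> real^'k^'d \<Rightarrow> real^'k^'m \<Rightarrow> real^'m^'d" where
  "Kmat W D Dbar = W ** D ** matrix_inv (transpose D ** W ** D) ** transpose Dbar"

definition rho :: "('x \<Rightarrow> real \<Rightarrow> real measure) \<Rightarrow> 'x \<Rightarrow> real \<Rightarrow> real" where
  "rho \<kappa> x a = (\<integral>r. r \<partial>(\<kappa> x a))"

end

theory Submission
  imports Defs
begin

text \<open>Fix a sample \<open>i\<close>. Conditioning on \<open>(X\<^sub>i, A\<^sub>i)\<close> replaces the reward by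
  \<open>\<rho>(X\<^sub>i, A\<^sub>i)\<close>, and conditioning on \<open>X\<^sub>i\<close> replaces the indicator of \<open>A\<^sub>i = a\<close> by the
  propensity \<open>\<pi>\<^sub>i(a | X\<^sub>i)\<close>, which cancels the inverse propensity weight. What remains at
  \<open>x = X\<^sub>i\<close> is \<open>\<Sum>\<^sub>k \<rho>(x, a\<^sub>k) K(x)\<^sub>k\<^sub>j\<close> with \<open>abar\<^sub>j = pibar x\<close>. By the regression
  assumption \<open>(\<rho>(x, a\<^sub>k))\<^sub>k = D \<beta>(x)\<close>, and \<open>\<beta>\<^sup>T D\<^sup>T W D (D\<^sup>T W D)\<^sup>-\<^sup>1 Dbar\<^sup>T = (Dbar \<beta>)\<^sup>T\<close>,
  whose \<open>j\<close>-th entry is \<open>\<rho>(x, pibar x)\<close>. As \<open>X\<^sub>i\<close> has the law of \<open>X\<close>, every term of the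
  estimator, and hence their average, has expectation \<open>V(pibar)\<close>.\<close>

lemma borel_measurable_vec_nth [measurable (raw)]:
  fixes F :: "'b \<Rightarrow> 'a::real_normed_vector ^ 'n"
  assumes "F \<in> borel_measurable N"
  shows "(\<lambda>x. F x $ i) \<in> borel_measurable N"
  by (rule borel_measurable_continuous_on[OF _ assms]) (intro continuous_intros continuous_on_id)

lemma borel_measurable_vec_lambda:
  fixes F :: "'b \<Rightarrow> 'a::euclidean_space ^ 'n"
  assumes "\<And>i. (\<lambda>x. F x $ i) \<in> borel_measurable N"
  shows "F \<in> borel_measurable N"
  unfolding borel_measurable_euclidean_space[where f=F]
proof
  fix b :: "'a ^ 'n" assume "b \<in> Basis"
  then obtain i u where b: "b = axis i u" and "u \<in> Basis" unfolding Basis_vec_def by blast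
  have "(\<lambda>x. F x $ i \<bullet> u) \<in> borel_measurable N"
    using assms[of i] by measurable
  then show "(\<lambda>x. F x \<bullet> b) \<in> borel_measurable N" by (simp add: b inner_axis)
qed

lemma borel_measurable_det [measurable (raw)]:
  fixes F :: "'b \<Rightarrow> real ^ 'n ^ 'n"
  assumes [measurable]: "F \<in> borel_measurable N"
  shows "(\<lambda>x. det (F x)) \<in> borel_measurable N"
  unfolding det_def by measurable

lemma borel_measurable_matrix_matrix_mult [measurable (raw)]:
  fixes F :: "'b \<Rightarrow> real ^ 'n ^ 'm" and G :: "'b \<Rightarrow> real ^ 'k ^ 'n"
  assumes [measurable]: "F \<in> borel_measurable N" "G \<in> borel_measurable N"
  shows "(\<lambda>x. F x ** G x) \<in> borel_measurable N"
  by (intro borel_measurable_vec_lambda) (simp add: matrix_matrix_mult_def)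

lemma borel_measurable_matrix_vector_mult [measurable (raw)]:
  fixes F :: "'b \<Rightarrow> real ^ 'n ^ 'm" and G :: "'b \<Rightarrow> real ^ 'n"
  assumes [measurable]: "F \<in> borel_measurable N" "G \<in> borel_measurable N"
  shows "(\<lambda>x. F x *v G x) \<in> borel_measurable N"
  by (intro borel_measurable_vec_lambda) (simp add: matrix_vector_mult_def)

lemma borel_measurable_transpose [measurable (raw)]:
  fixes F :: "'b \<Rightarrow> real ^ 'n ^ 'm"
  assumes [measurable]: "F \<in> borel_measurable N"
  shows "(\<lambda>x. transpose (F x)) \<in> borel_measurable N"
  by (intro borel_measurable_vec_lambda) (simp add: transpose_def)

text \<open>\<^const>\<open>matrix_inv\<close> is a choice on singular matrices, hence not measurable; the inverse
  given by Cramer's rule agrees with it on invertible matrices and is measurable everywhere.\<close>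
definition cramer_inv :: "real^'n^'n \<Rightarrow> real^'n^'n" where
  "cramer_inv A = (\<chi> r c. det (\<chi> i j. if j = r then axis c 1 $ i else A $ i $ j) / det A)"

lemma borel_measurable_cramer_inv [measurable (raw)]:
  fixes F :: "'b \<Rightarrow> real ^ 'n ^ 'n"
  assumes [measurable]: "F \<in> borel_measurable N"
  shows "(\<lambda>x. cramer_inv (F x)) \<in> borel_measurable N"
proof -
  have [measurable]: "(\<lambda>x. (\<chi> i j. if j = r then axis c 1 $ i else F x $ i $ j) :: real^'n^'n)
      \<in> borel_measurable N" for r c
    by (intro borel_measurable_vec_lambda) simp
  show ?thesis unfolding cramer_inv_def by (intro borel_measurable_vec_lambda) simp
qed

lemma matrix_inv_right:
  fixes A :: "real^'n^'n"
  assumes "invertible A"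
  shows "A ** matrix_inv A = mat 1"
proof -
  from assms obtain B where "A ** B = mat 1 \<and> B ** A = mat 1" unfolding invertible_def by blast
  then have "A ** matrix_inv A = mat 1 \<and> matrix_inv A ** A = mat 1"
    unfolding matrix_inv_def by (rule someI)
  then show ?thesis by blast
qed

lemma matrix_inv_eq_cramer_inv:
  fixes A :: "real^'n^'n"
  assumes "invertible A"
  shows "matrix_inv A = cramer_inv A"
proof -
  have "det A \<noteq> 0" using assms invertible_det_nz by blast
  moreover have "A *v (matrix_inv A *v axis c 1) = axis c 1" for c
    by (simp add: matrix_vector_mul_assoc matrix_inv_right[OF assms])
  ultimately have column: "matrix_inv A *v axis c 1
      = (\<chi> r. det (\<chi> i j. if j = r then axis c 1 $ i else A $ i $ j) / det A)" for c
    using cramer by blast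
  have "matrix_inv A $ r $ c = cramer_inv A $ r $ c" for r c
  proof -
    have "matrix_inv A $ r $ c = (matrix_inv A *v axis c 1) $ r"
      by (simp add: matrix_vector_mult_def axis_def if_distrib cong: if_cong)
    also have "\<dots> = cramer_inv A $ r $ c"
      by (simp add: column cramer_inv_def)
    finally show ?thesis .
  qed
  then show ?thesis by (simp add: vec_eq_iff)
qed

lemma invertible_weighted_gram:
  fixes W :: "real^'d^'d" and D :: "real^'k^'d"
  assumes W: "sym_posdef W" and D: "rank D = CARD('k)"
  shows "invertible (transpose D ** W ** D)"
proof -
  let ?G = "transpose D ** W ** D"
  have "z = 0" if "?G *v z = 0" for z
  proof -
    have "(D *v z) \<bullet> (W *v (D *v z)) = z \<bullet> (?G *v z)"
      by (metis dot_lmul_matrix inner_commute matrix_vector_mul_assoc transpose_matrix_vector)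
    then have "D *v z = 0" using that W unfolding sym_posdef_def by force
    then show "z = 0"
      using D full_rank_injective by (metis inj_def matrix_vector_mult_0_right)
  qed
  then have "inj ((*v) ?G)"
    by (metis (no_types, lifting) injI eq_iff_diff_eq_0 matrix_vector_mult_diff_distrib)
  then show ?thesis
    using invertible_left_inverse matrix_left_invertible_injective by blast
qed

lemma Kmat_reproduces_design:
  fixes W :: "real^'d^'d" and D :: "real^'k^'d" and Dbar :: "real^'k^'m"
  assumes W: "sym_posdef W" and D: "rank D = CARD('k)"
  shows "(D *v \<beta>) v* Kmat W D Dbar = Dbar *v \<beta>"
proof -
  let ?G = "transpose D ** W ** D"
  have tW: "transpose W = W" using W unfolding sym_posdef_def by simp
  have tG: "transpose ?G = ?G" by (simp add: matrix_transpose_mul tW matrix_mul_assoc)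
  have "(D *v \<beta>) v* Kmat W D Dbar = ((((D *v \<beta>) v* W) v* D) v* matrix_inv ?G) v* transpose Dbar"
    unfolding Kmat_def by (simp only: vector_matrix_mul_assoc matrix_mul_assoc)
  also have "((D *v \<beta>) v* W) v* D = \<beta> v* ?G"
    by (metis tG tW transpose_matrix_vector matrix_vector_mul_assoc matrix_mul_assoc)
  also have "(\<beta> v* ?G) v* matrix_inv ?G = \<beta>"
    by (simp add: vector_matrix_mul_assoc matrix_inv_right[OF invertible_weighted_gram[OF W D]])
  finally show ?thesis by simp
qed

lemma Kmat_eq_cramer_inv:
  fixes W :: "real^'d^'d" and D :: "real^'k^'d" and Dbar :: "real^'k^'m"
  assumes "sym_posdef W" and "rank D = CARD('k)"
  shows "Kmat W D Dbar = W ** D ** cramer_inv (transpose D ** W ** D) ** transpose Dbar"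
  using assms by (simp add: Kmat_def matrix_inv_eq_cramer_inv invertible_weighted_gram)

lemma measurable_prob_kernel:
  fixes K :: "'y \<Rightarrow> 'b::topological_space measure"
  assumes prob: "\<And>y. y \<in> space N \<Longrightarrow> prob_space (K y)"
    and sets: "\<And>y. y \<in> space N \<Longrightarrow> sets (K y) = sets borel"
    and meas: "\<And>C. C \<in> sets borel \<Longrightarrow> (\<lambda>y. measure (K y) C) \<in> borel_measurable N"
  shows "K \<in> N \<rightarrow>\<^sub>M subprob_algebra borel"
proof (rule measurable_subprob_algebra)
  show "subprob_space (K y)" if "y \<in> space N" for y
    using prob[OF that] by (rule prob_space_imp_subprob_space)
next
  fix C :: "'b set" assume "C \<in> sets borel"
  then have "(\<lambda>y. ennreal (measure (K y) C)) \<in> borel_measurable N"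
    using meas by measurable
  then show "(\<lambda>y. emeasure (K y) C) \<in> borel_measurable N"
  proof (rule measurable_cong[THEN iffD1, rotated])
    fix y assume "y \<in> space N"
    then interpret prob_space "K y" by (rule prob)
    show "ennreal (measure (K y) C) = emeasure (K y) C" by (rule emeasure_eq_measure[symmetric])
  qed
qed (rule sets)

lemma integral_eq_if_weighted_laws_eq:
  fixes Y :: "'w \<Rightarrow> 'y" and u v :: "'w \<Rightarrow> real" and g :: "'y \<Rightarrow> real"
  assumes [measurable]: "Y \<in> M \<rightarrow>\<^sub>M S" "u \<in> borel_measurable M" "v \<in> borel_measurable M"
    and nonneg: "\<And>\<omega>. \<omega> \<in> space M \<Longrightarrow> 0 \<le> u \<omega>" "\<And>\<omega>. \<omega> \<in> space M \<Longrightarrow> 0 \<le> v \<omega>"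
    and laws: "\<And>B. B \<in> sets S \<Longrightarrow>
      (\<integral>\<^sup>+\<omega>. ennreal (u \<omega>) * indicator B (Y \<omega>) \<partial>M) = (\<integral>\<^sup>+\<omega>. ennreal (v \<omega>) * indicator B (Y \<omega>) \<partial>M)"
    and [measurable]: "g \<in> borel_measurable S"
    and int: "integrable M (\<lambda>\<omega>. u \<omega> * g (Y \<omega>))"
  shows "integrable M (\<lambda>\<omega>. v \<omega> * g (Y \<omega>))"
    and "(\<integral>\<omega>. u \<omega> * g (Y \<omega>) \<partial>M) = (\<integral>\<omega>. v \<omega> * g (Y \<omega>) \<partial>M)"
proof -
  define law where "law w = distr (density M (\<lambda>\<omega>. ennreal (w \<omega>))) S Y" for w :: "'w \<Rightarrow> real"
  have emeasure_law: "emeasure (law w) B = (\<integral>\<^sup>+\<omega>. ennreal (w \<omega>) * indicator B (Y \<omega>) \<partial>M)"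
    if [measurable]: "w \<in> borel_measurable M" "B \<in> sets S" for w B
    unfolding law_def
    by (simp add: emeasure_distr emeasure_density) (auto intro!: nn_integral_cong simp: indicator_def)
  have law_eq: "law u = law v"
  proof (rule measure_eqI)
    show "sets (law u) = sets (law v)" by (simp add: law_def)
    fix B assume "B \<in> sets (law u)"
    then have "B \<in> sets S" by (simp add: law_def)
    then show "emeasure (law u) B = emeasure (law v) B" by (simp add: emeasure_law laws)
  qed
  have integrable_law: "integrable (law w) g \<longleftrightarrow> integrable M (\<lambda>\<omega>. w \<omega> * g (Y \<omega>))"
    and integral_law: "integral\<^sup>L (law w) g = (\<integral>\<omega>. w \<omega> * g (Y \<omega>) \<partial>M)"
    if [measurable]: "w \<in> borel_measurable M" and "\<And>\<omega>. \<omega> \<in> space M \<Longrightarrow> 0 \<le> w \<omega>" for w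
    using that(2) unfolding law_def
    by (simp_all add: integrable_distr_eq integral_distr integrable_density integral_density)
  show "integrable M (\<lambda>\<omega>. v \<omega> * g (Y \<omega>))"
    using int law_eq integrable_law[of u] integrable_law[of v] nonneg by simp
  show "(\<integral>\<omega>. u \<omega> * g (Y \<omega>) \<partial>M) = (\<integral>\<omega>. v \<omega> * g (Y \<omega>) \<partial>M)"
    using law_eq integral_law[of u] integral_law[of v] nonneg by simp
qed

lemma nn_integral_disintegration:
  fixes M :: "'w measure" and S :: "'y measure" and Y :: "'w \<Rightarrow> 'y" and Rv :: "'w \<Rightarrow> real"
    and K :: "'w \<Rightarrow> real measure" and \<phi> :: "'y \<times> real \<Rightarrow> ennreal"
  assumes M: "prob_space M"
    and Y[measurable]: "Y \<in> M \<rightarrow>\<^sub>M S" and Rv[measurable]: "Rv \<in> borel_measurable M"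
    and K[measurable]: "K \<in> M \<rightarrow>\<^sub>M subprob_algebra borel"
    and rect: "\<And>B C. B \<in> sets S \<Longrightarrow> C \<in> sets borel \<Longrightarrow>
       emeasure M {\<omega>\<in>space M. Y \<omega> \<in> B \<and> Rv \<omega> \<in> C} = (\<integral>\<^sup>+\<omega>. indicator B (Y \<omega>) * emeasure (K \<omega>) C \<partial>M)"
    and \<phi>[measurable]: "\<phi> \<in> borel_measurable (S \<Otimes>\<^sub>M borel)"
  shows "(\<integral>\<^sup>+\<omega>. \<phi> (Y \<omega>, Rv \<omega>) \<partial>M) = (\<integral>\<^sup>+\<omega>. \<integral>\<^sup>+r. \<phi> (Y \<omega>, r) \<partial>K \<omega> \<partial>M)"
proof -
  interpret prob_space M by (rule M)
  define L where "L \<omega> = distr (K \<omega>) (S \<Otimes>\<^sub>M borel) (\<lambda>r. (Y \<omega>, r))" for \<omega>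
  have L[measurable]: "L \<in> M \<rightarrow>\<^sub>M subprob_algebra (S \<Otimes>\<^sub>M borel)"
    unfolding L_def by (rule measurable_distr2[where f="\<lambda>\<omega> r. (Y \<omega>, r)"]) measurable
  have nn_integral_L: "(\<integral>\<^sup>+z. \<psi> z \<partial>L \<omega>) = (\<integral>\<^sup>+r. \<psi> (Y \<omega>, r) \<partial>K \<omega>)"
    if \<omega>: "\<omega> \<in> space M" and [measurable]: "\<psi> \<in> borel_measurable (S \<Otimes>\<^sub>M borel)" for \<omega> \<psi>
  proof -
    have "(\<lambda>r. (Y \<omega>, r)) \<in> K \<omega> \<rightarrow>\<^sub>M S \<Otimes>\<^sub>M borel"
      using measurable_space[OF Y \<omega>] by (simp add: measurable_cong_sets[OF sets_kernel[OF K \<omega>] refl])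
    then show ?thesis unfolding L_def by (subst nn_integral_distr) auto
  qed
  have law: "distr M (S \<Otimes>\<^sub>M borel) (\<lambda>\<omega>. (Y \<omega>, Rv \<omega>)) = M \<bind> L"
  proof (rule measure_eqI_generator_eq[OF Int_stable_pair_measure_generator[of S "borel :: real measure"],
        where \<Omega>="space S \<times> space borel" and A="\<lambda>_. space S \<times> space borel"])
    show "sets (M \<bind> L) = sigma_sets (space S \<times> space borel) {a \<times> b |a b. a \<in> sets S \<and> b \<in> sets borel}"
      by (simp add: sets_bind[OF sets_kernel[OF L] not_empty] sets_pair_measure)
    show "emeasure (distr M (S \<Otimes>\<^sub>M borel) (\<lambda>\<omega>. (Y \<omega>, Rv \<omega>))) (space S \<times> space borel) \<noteq> \<infinity>" for i :: nat
      by (subst emeasure_distr) (auto simp: space_pair_measure[symmetric] emeasure_finite)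
    fix X assume "X \<in> {a \<times> b |a b. a \<in> sets S \<and> b \<in> sets (borel :: real measure)}"
    then obtain B C where X: "X = B \<times> C" and [measurable]: "B \<in> sets S" "C \<in> sets borel" by blast
    have "emeasure (distr M (S \<Otimes>\<^sub>M borel) (\<lambda>\<omega>. (Y \<omega>, Rv \<omega>))) X = emeasure M {\<omega>\<in>space M. Y \<omega> \<in> B \<and> Rv \<omega> \<in> C}"
      unfolding X by (subst emeasure_distr) (auto intro!: arg_cong[where f="emeasure M"])
    also have "\<dots> = (\<integral>\<^sup>+\<omega>. indicator B (Y \<omega>) * emeasure (K \<omega>) C \<partial>M)"
      by (rule rect) simp_all
    also have "\<dots> = (\<integral>\<^sup>+\<omega>. emeasure (L \<omega>) X \<partial>M)"
    proof (rule nn_integral_cong)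
      fix \<omega> assume \<omega>: "\<omega> \<in> space M"
      note sets_kernel[OF K \<omega>, measurable_cong]
      have "emeasure (L \<omega>) X = (\<integral>\<^sup>+z. indicator X z \<partial>L \<omega>)"
        using sets_kernel[OF L \<omega>] by (simp add: X)
      also have "\<dots> = (\<integral>\<^sup>+r. indicator B (Y \<omega>) * indicator C r \<partial>K \<omega>)"
        by (simp add: nn_integral_L[OF \<omega>] X indicator_times)
      also have "\<dots> = indicator B (Y \<omega>) * emeasure (K \<omega>) C"
        by (rule nn_integral_cmult_indicator) (simp add: sets_kernel[OF K \<omega>])
      finally show "indicator B (Y \<omega>) * emeasure (K \<omega>) C = emeasure (L \<omega>) X" ..
    qed
    also have "\<dots> = emeasure (M \<bind> L) X"
      by (simp add: emeasure_bind[OF not_empty L] X)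
    finally show "emeasure (distr M (S \<Otimes>\<^sub>M borel) (\<lambda>\<omega>. (Y \<omega>, Rv \<omega>))) X = emeasure (M \<bind> L) X" .
  qed (auto simp: sets_pair_measure dest: sets.sets_into_space intro!: exI[of _ "space S"])
  have "(\<integral>\<^sup>+\<omega>. \<phi> (Y \<omega>, Rv \<omega>) \<partial>M) = (\<integral>\<^sup>+z. \<phi> z \<partial>(M \<bind> L))"
    by (simp add: nn_integral_distr flip: law)
  also have "\<dots> = (\<integral>\<^sup>+\<omega>. \<integral>\<^sup>+r. \<phi> (Y \<omega>, r) \<partial>K \<omega> \<partial>M)"
    by (simp add: nn_integral_bind[OF \<phi> L] nn_integral_L cong: nn_integral_cong)
  finally show ?thesis .
qed

lemma integral_disintegration_nonneg:
  fixes M :: "'w measure" and S :: "'y measure" and Y :: "'w \<Rightarrow> 'y" and Rv :: "'w \<Rightarrow> real"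
    and K :: "'w \<Rightarrow> real measure" and p :: "real \<Rightarrow> real" and g :: "'y \<Rightarrow> real"
  assumes M: "prob_space M"
    and Y[measurable]: "Y \<in> M \<rightarrow>\<^sub>M S" and Rv[measurable]: "Rv \<in> borel_measurable M"
    and K[measurable]: "K \<in> M \<rightarrow>\<^sub>M subprob_algebra borel"
    and rect: "\<And>B C. B \<in> sets S \<Longrightarrow> C \<in> sets borel \<Longrightarrow>
       emeasure M {\<omega>\<in>space M. Y \<omega> \<in> B \<and> Rv \<omega> \<in> C} = (\<integral>\<^sup>+\<omega>. indicator B (Y \<omega>) * emeasure (K \<omega>) C \<partial>M)"
    and p[measurable]: "p \<in> borel_measurable borel" and p_nonneg: "\<And>r. 0 \<le> p r"
    and K_int: "\<And>\<omega>. \<omega> \<in> space M \<Longrightarrow> integrable (K \<omega>) p"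
    and g[measurable]: "g \<in> borel_measurable S"
    and int: "integrable M (\<lambda>\<omega>. p (Rv \<omega>) * g (Y \<omega>))"
  shows "integrable M (\<lambda>\<omega>. (\<integral>r. p r \<partial>K \<omega>) * g (Y \<omega>))"
    and "(\<integral>\<omega>. p (Rv \<omega>) * g (Y \<omega>) \<partial>M) = (\<integral>\<omega>. (\<integral>r. p r \<partial>K \<omega>) * g (Y \<omega>) \<partial>M)"
proof -
  have mean_p[measurable]: "(\<lambda>\<omega>. \<integral>r. p r \<partial>K \<omega>) \<in> borel_measurable M"
    by (rule measurable_compose[OF K integral_measurable_subprob_algebra]) (rule p)
  have laws: "(\<integral>\<^sup>+\<omega>. ennreal (p (Rv \<omega>)) * indicator B (Y \<omega>) \<partial>M)
      = (\<integral>\<^sup>+\<omega>. ennreal (\<integral>r. p r \<partial>K \<omega>) * indicator B (Y \<omega>) \<partial>M)"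
    if [measurable]: "B \<in> sets S" for B
  proof -
    have "(\<lambda>(y, r). ennreal (p r) * indicator B y) \<in> borel_measurable (S \<Otimes>\<^sub>M borel)"
      by measurable
    from nn_integral_disintegration[OF M Y Rv K rect this]
    have "(\<integral>\<^sup>+\<omega>. ennreal (p (Rv \<omega>)) * indicator B (Y \<omega>) \<partial>M)
        = (\<integral>\<^sup>+\<omega>. \<integral>\<^sup>+r. ennreal (p r) * indicator B (Y \<omega>) \<partial>K \<omega> \<partial>M)"
      by (simp only: case_prod_conv)
    also have "\<dots> = (\<integral>\<^sup>+\<omega>. ennreal (\<integral>r. p r \<partial>K \<omega>) * indicator B (Y \<omega>) \<partial>M)"
    proof (rule nn_integral_cong)
      fix \<omega> assume \<omega>: "\<omega> \<in> space M"
      have [measurable]: "p \<in> borel_measurable (K \<omega>)"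
        using measurable_cong_sets[OF sets_kernel[OF K \<omega>] refl] p by blast
      have "(\<integral>\<^sup>+r. ennreal (p r) * indicator B (Y \<omega>) \<partial>K \<omega>) = (\<integral>\<^sup>+r. ennreal (p r) \<partial>K \<omega>) * indicator B (Y \<omega>)"
        by (rule nn_integral_multc) measurable
      also have "(\<integral>\<^sup>+r. ennreal (p r) \<partial>K \<omega>) = ennreal (\<integral>r. p r \<partial>K \<omega>)"
        by (rule nn_integral_eq_integral[OF K_int[OF \<omega>]]) (simp add: p_nonneg)
      finally show "(\<integral>\<^sup>+r. ennreal (p r) * indicator B (Y \<omega>) \<partial>K \<omega>) = ennreal (\<integral>r. p r \<partial>K \<omega>) * indicator B (Y \<omega>)" .
    qed
    finally show ?thesis .
  qed
  have "(\<lambda>\<omega>. p (Rv \<omega>)) \<in> borel_measurable M" by measurable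
  note weighted = integral_eq_if_weighted_laws_eq[OF Y this mean_p _ _ laws g int]
  show "integrable M (\<lambda>\<omega>. (\<integral>r. p r \<partial>K \<omega>) * g (Y \<omega>))"
    and "(\<integral>\<omega>. p (Rv \<omega>) * g (Y \<omega>) \<partial>M) = (\<integral>\<omega>. (\<integral>r. p r \<partial>K \<omega>) * g (Y \<omega>) \<partial>M)"
    by (rule weighted; simp add: p_nonneg integral_nonneg)+
qed

lemma integral_disintegration:
  fixes M :: "'w measure" and S :: "'y measure" and Y :: "'w \<Rightarrow> 'y" and Rv :: "'w \<Rightarrow> real"
    and K :: "'w \<Rightarrow> real measure" and g :: "'y \<Rightarrow> real"
  assumes M: "prob_space M"
    and Y[measurable]: "Y \<in> M \<rightarrow>\<^sub>M S" and Rv[measurable]: "Rv \<in> borel_measurable M"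
    and K[measurable]: "K \<in> M \<rightarrow>\<^sub>M subprob_algebra borel"
    and rect: "\<And>B C. B \<in> sets S \<Longrightarrow> C \<in> sets borel \<Longrightarrow>
       emeasure M {\<omega>\<in>space M. Y \<omega> \<in> B \<and> Rv \<omega> \<in> C} = (\<integral>\<^sup>+\<omega>. indicator B (Y \<omega>) * emeasure (K \<omega>) C \<partial>M)"
    and K_int: "\<And>\<omega>. \<omega> \<in> space M \<Longrightarrow> integrable (K \<omega>) (\<lambda>r. r)"
    and g[measurable]: "g \<in> borel_measurable S"
    and int: "integrable M (\<lambda>\<omega>. Rv \<omega> * g (Y \<omega>))"
  shows "integrable M (\<lambda>\<omega>. (\<integral>r. r \<partial>K \<omega>) * g (Y \<omega>))"
    and "(\<integral>\<omega>. Rv \<omega> * g (Y \<omega>) \<partial>M) = (\<integral>\<omega>. (\<integral>r. r \<partial>K \<omega>) * g (Y \<omega>) \<partial>M)"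
proof -
  define pos neg where "pos r = max r 0" and "neg r = max (- r) 0" for r :: real
  have pos_meas[measurable]: "pos \<in> borel_measurable borel"
    and neg_meas[measurable]: "neg \<in> borel_measurable borel"
    unfolding pos_def neg_def by measurable
  have nonneg: "0 \<le> pos r" "0 \<le> neg r" for r
    by (simp_all add: pos_def neg_def)
  have K_int_pos: "integrable (K \<omega>) pos" and K_int_neg: "integrable (K \<omega>) neg" if "\<omega> \<in> space M" for \<omega>
    unfolding pos_def neg_def using K_int[OF that] by (intro integrable_max; simp)+
  have "integrable M (\<lambda>\<omega>. pos (Rv \<omega>) * g (Y \<omega>))" "integrable M (\<lambda>\<omega>. neg (Rv \<omega>) * g (Y \<omega>))"
    by (intro Bochner_Integration.integrable_bound[OF int] AE_I2;
        simp add: pos_def neg_def abs_mult mult_right_mono)+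
  note int_pos = this(1) and int_neg = this(2)
  note pos = integral_disintegration_nonneg[OF M Y Rv K rect pos_meas nonneg(1) K_int_pos g int_pos]
  note neg = integral_disintegration_nonneg[OF M Y Rv K rect neg_meas nonneg(2) K_int_neg g int_neg]
  have mean_split: "(\<integral>r. r \<partial>K \<omega>) * g (Y \<omega>) = (\<integral>r. pos r \<partial>K \<omega>) * g (Y \<omega>) - (\<integral>r. neg r \<partial>K \<omega>) * g (Y \<omega>)"
    if "\<omega> \<in> space M" for \<omega>
  proof -
    have "(\<integral>r. pos r \<partial>K \<omega>) - (\<integral>r. neg r \<partial>K \<omega>) = (\<integral>r. pos r - neg r \<partial>K \<omega>)"
      using K_int_pos[OF that] K_int_neg[OF that] by (rule Bochner_Integration.integral_diff[symmetric])
    also have "\<dots> = (\<integral>r. r \<partial>K \<omega>)"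
      by (intro Bochner_Integration.integral_cong) (auto simp: pos_def neg_def)
    finally show ?thesis by (metis left_diff_distrib)
  qed
  have "integrable M (\<lambda>\<omega>. (\<integral>r. pos r \<partial>K \<omega>) * g (Y \<omega>) - (\<integral>r. neg r \<partial>K \<omega>) * g (Y \<omega>))"
    using pos(1) neg(1) by (rule Bochner_Integration.integrable_diff)
  then show "integrable M (\<lambda>\<omega>. (\<integral>r. r \<partial>K \<omega>) * g (Y \<omega>))"
    by (rule Bochner_Integration.integrable_cong[THEN iffD1, OF refl, rotated]) (simp add: mean_split)
  have "(\<integral>\<omega>. Rv \<omega> * g (Y \<omega>) \<partial>M) = (\<integral>\<omega>. pos (Rv \<omega>) * g (Y \<omega>) - neg (Rv \<omega>) * g (Y \<omega>) \<partial>M)"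
    by (intro Bochner_Integration.integral_cong) (auto simp: pos_def neg_def max_def algebra_simps)
  also have "\<dots> = (\<integral>\<omega>. pos (Rv \<omega>) * g (Y \<omega>) \<partial>M) - (\<integral>\<omega>. neg (Rv \<omega>) * g (Y \<omega>) \<partial>M)"
    using int_pos int_neg by (rule Bochner_Integration.integral_diff)
  also have "\<dots> = (\<integral>\<omega>. (\<integral>r. pos r \<partial>K \<omega>) * g (Y \<omega>) \<partial>M) - (\<integral>\<omega>. (\<integral>r. neg r \<partial>K \<omega>) * g (Y \<omega>) \<partial>M)"
    by (simp only: pos(2) neg(2))
  also have "\<dots> = (\<integral>\<omega>. (\<integral>r. pos r \<partial>K \<omega>) * g (Y \<omega>) - (\<integral>r. neg r \<partial>K \<omega>) * g (Y \<omega>) \<partial>M)"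
    using pos(1) neg(1) by (rule Bochner_Integration.integral_diff[symmetric])
  also have "\<dots> = (\<integral>\<omega>. (\<integral>r. r \<partial>K \<omega>) * g (Y \<omega>) \<partial>M)"
    by (intro Bochner_Integration.integral_cong) (simp_all add: mean_split)
  finally show "(\<integral>\<omega>. Rv \<omega> * g (Y \<omega>) \<partial>M) = (\<integral>\<omega>. (\<integral>r. r \<partial>K \<omega>) * g (Y \<omega>) \<partial>M)" .
qed

lemma sets_restrict_spaceE:
  assumes "B \<in> sets (restrict_space M \<Omega>)"
  obtains B' where "B' \<in> sets M" "B = \<Omega> \<inter> B'"
  using assms by (auto simp: sets_restrict_space)

lemma integral_indicator_action_eq_propensity:
  fixes M :: "'w measure" and X :: "'w \<Rightarrow> 'x::topological_space" and A :: "'w \<Rightarrow> real"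
    and q h :: "'x \<Rightarrow> real"
  assumes M: "prob_space M"
    and [measurable]: "X \<in> borel_measurable M" "A \<in> borel_measurable M"
    and X_in: "\<And>\<omega>. \<omega> \<in> space M \<Longrightarrow> X \<omega> \<in> Xset"
    and [measurable]: "q \<in> borel_measurable borel"
    and q_nonneg: "\<And>x. x \<in> Xset \<Longrightarrow> 0 \<le> q x" and q_le_1: "\<And>x. x \<in> Xset \<Longrightarrow> q x \<le> 1"
    and propensity: "\<And>B. B \<in> sets borel \<Longrightarrow>
      measure M {\<omega>\<in>space M. X \<omega> \<in> B \<and> A \<omega> = a} = (\<integral>\<omega>. indicator B (X \<omega>) * q (X \<omega>) \<partial>M)"
    and h: "h \<in> borel_measurable (restrict_space borel Xset)"
    and int: "integrable M (\<lambda>\<omega>. indicator {a} (A \<omega>) * h (X \<omega>))"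
  shows "integrable M (\<lambda>\<omega>. q (X \<omega>) * h (X \<omega>))"
    and "(\<integral>\<omega>. indicator {a} (A \<omega>) * h (X \<omega>) \<partial>M) = (\<integral>\<omega>. q (X \<omega>) * h (X \<omega>) \<partial>M)"
proof -
  interpret prob_space M by (rule M)
  have X_restrict: "X \<in> M \<rightarrow>\<^sub>M restrict_space borel Xset"
    using X_in by (intro measurable_restrict_space2) auto
  have laws: "(\<integral>\<^sup>+\<omega>. ennreal (indicator {a} (A \<omega>)) * indicator B (X \<omega>) \<partial>M)
      = (\<integral>\<^sup>+\<omega>. ennreal (q (X \<omega>)) * indicator B (X \<omega>) \<partial>M)"
    if B_sets: "B \<in> sets (restrict_space borel Xset)" for B
  proof -
    obtain B' where [measurable]: "B' \<in> sets borel" and B: "B = Xset \<inter> B'"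
      by (rule sets_restrict_spaceE[OF B_sets])
    have "(\<integral>\<^sup>+\<omega>. ennreal (indicator {a} (A \<omega>)) * indicator B (X \<omega>) \<partial>M)
        = (\<integral>\<^sup>+\<omega>. indicator {\<omega>\<in>space M. X \<omega> \<in> B' \<and> A \<omega> = a} \<omega> \<partial>M)"
      by (intro nn_integral_cong) (auto simp: B X_in indicator_def)
    also have "\<dots> = ennreal (\<integral>\<omega>. indicator B' (X \<omega>) * q (X \<omega>) \<partial>M)"
      by (simp add: emeasure_eq_measure propensity)
    also have "\<dots> = (\<integral>\<^sup>+\<omega>. ennreal (indicator B' (X \<omega>) * q (X \<omega>)) \<partial>M)"
      using X_in q_nonneg q_le_1
      by (intro nn_integral_eq_integral[symmetric] integrable_const_bound[where B=1] AE_I2)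
        (auto simp: indicator_def)
    also have "\<dots> = (\<integral>\<^sup>+\<omega>. ennreal (q (X \<omega>)) * indicator B (X \<omega>) \<partial>M)"
      by (intro nn_integral_cong) (auto simp: B X_in indicator_def)
    finally show ?thesis .
  qed
  have "(\<lambda>\<omega>. indicator {a} (A \<omega>) :: real) \<in> borel_measurable M" "(\<lambda>\<omega>. q (X \<omega>)) \<in> borel_measurable M"
    by measurable
  note weighted = integral_eq_if_weighted_laws_eq[OF X_restrict this _ _ laws h int]
  show "integrable M (\<lambda>\<omega>. q (X \<omega>) * h (X \<omega>))"
    and "(\<integral>\<omega>. indicator {a} (A \<omega>) * h (X \<omega>) \<partial>M) = (\<integral>\<omega>. q (X \<omega>) * h (X \<omega>) \<partial>M)"
    using weighted X_in q_nonneg by simp_all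
qed

lemma integral_comp_eq_if_distr_eq:
  fixes X Y :: "'w \<Rightarrow> 'x::topological_space" and h :: "'x \<Rightarrow> real"
  assumes [measurable]: "X \<in> borel_measurable M" "Y \<in> borel_measurable M"
    and X_in: "\<And>\<omega>. \<omega> \<in> space M \<Longrightarrow> X \<omega> \<in> Xset" and Y_in: "\<And>\<omega>. \<omega> \<in> space M \<Longrightarrow> Y \<omega> \<in> Xset"
    and same_law: "distr M borel X = distr M borel Y"
    and [measurable]: "h \<in> borel_measurable (restrict_space borel Xset)"
  shows "(\<integral>\<omega>. h (X \<omega>) \<partial>M) = (\<integral>\<omega>. h (Y \<omega>) \<partial>M)"
proof -
  have [measurable]: "X \<in> M \<rightarrow>\<^sub>M restrict_space borel Xset" "Y \<in> M \<rightarrow>\<^sub>M restrict_space borel Xset"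
    using X_in Y_in by (auto intro!: measurable_restrict_space2)
  have "distr M (restrict_space borel Xset) X = distr M (restrict_space borel Xset) Y"
  proof (rule measure_eqI)
    fix B assume "B \<in> sets (distr M (restrict_space borel Xset) X)"
    then have B_sets: "B \<in> sets (restrict_space borel Xset)" by simp
    then obtain B' where [measurable]: "B' \<in> sets borel" and B: "B = Xset \<inter> B'"
      by (rule sets_restrict_spaceE)
    have "emeasure (distr M (restrict_space borel Xset) X) B = emeasure M (X -` B' \<inter> space M)"
      using X_in by (subst emeasure_distr[OF _ B_sets]) (auto simp: B intro!: arg_cong[where f="emeasure M"])
    also have "\<dots> = emeasure M (Y -` B' \<inter> space M)"
      using arg_cong[OF same_law, of "\<lambda>N. emeasure N B'"] by (simp add: emeasure_distr)
    also have "\<dots> = emeasure (distr M (restrict_space borel Xset) Y) B"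
      using Y_in by (subst emeasure_distr[OF _ B_sets]) (auto simp: B intro!: arg_cong[where f="emeasure M"])
    finally show "emeasure (distr M (restrict_space borel Xset) X) B = emeasure (distr M (restrict_space borel Xset) Y) B" .
  qed simp
  note law_eq = this
  have "(\<integral>\<omega>. h (X \<omega>) \<partial>M) = integral\<^sup>L (distr M (restrict_space borel Xset) X) h"
    by (rule integral_distr[symmetric]) measurable
  also have "\<dots> = integral\<^sup>L (distr M (restrict_space borel Xset) Y) h"
    by (simp only: law_eq)
  also have "\<dots> = (\<integral>\<omega>. h (Y \<omega>) \<partial>M)"
    by (rule integral_distr) measurable
  finally show ?thesis .
qed

text \<open>\<open>Xset\<close> need not be a Borel set and \<open>\<kappa>\<close> is a probability kernel only over \<open>Xset\<close>, so
  functions of the features are measured with respect to the trace \<open>\<sigma>\<close>-algebra on \<open>Xset\<close>.\<close>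
lemma borel_measurable_rho_restrict_space:
  fixes \<kappa> :: "'x::second_countable_topology \<Rightarrow> real \<Rightarrow> real measure" and \<alpha> :: "'x \<Rightarrow> real"
  assumes kappa_prob: "\<forall>x\<in>Xset. \<forall>a\<in>As. prob_space (\<kappa> x a) \<and> sets (\<kappa> x a) = sets borel"
    and kappa_meas: "\<forall>C\<in>sets borel. (\<lambda>(x, a). measure (\<kappa> x a) C) \<in> borel_measurable borel"
    and [measurable]: "\<alpha> \<in> borel_measurable borel" and \<alpha>_in: "\<forall>x\<in>Xset. \<alpha> x \<in> As"
  shows "(\<lambda>x. rho \<kappa> x (\<alpha> x)) \<in> borel_measurable (restrict_space borel Xset)"
proof -
  have "(\<lambda>x. \<kappa> x (\<alpha> x)) \<in> restrict_space borel Xset \<rightarrow>\<^sub>M subprob_algebra borel"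
  proof (rule measurable_prob_kernel)
    fix C :: "real set" assume "C \<in> sets borel"
    then have "(\<lambda>(x, a). measure (\<kappa> x a) C) \<in> borel_measurable (borel \<Otimes>\<^sub>M borel)"
      using kappa_meas by (simp add: borel_prod)
    then have "(\<lambda>x. measure (\<kappa> x (\<alpha> x)) C) \<in> borel_measurable borel"
      by measurable
    then show "(\<lambda>x. measure (\<kappa> x (\<alpha> x)) C) \<in> borel_measurable (restrict_space borel Xset)"
      by (rule measurable_restrict_space1)
  qed (use kappa_prob \<alpha>_in in \<open>auto simp: space_restrict_space\<close>)
  then show ?thesis
    unfolding rho_def by (rule measurable_compose[OF _ integral_measurable_subprob_algebra]) simp
qed

lemma integral_reward_eq_integral_rho:
  fixes M :: "'w measure" and X :: "'w \<Rightarrow> 'x::second_countable_topology" and A R :: "'w \<Rightarrow> real"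
    and \<kappa> :: "'x \<Rightarrow> real \<Rightarrow> real measure" and g :: "'x \<times> real \<Rightarrow> real"
  assumes M: "prob_space M"
    and [measurable]: "X \<in> borel_measurable M" "A \<in> borel_measurable M" "R \<in> borel_measurable M"
    and X_in: "\<forall>\<omega>\<in>space M. X \<omega> \<in> Xset" and A_in: "\<forall>\<omega>\<in>space M. A \<omega> \<in> As"
    and kappa_prob: "\<forall>x\<in>Xset. \<forall>a\<in>As. prob_space (\<kappa> x a) \<and> sets (\<kappa> x a) = sets borel"
    and kappa_int: "\<forall>x\<in>Xset. \<forall>a\<in>As. integrable (\<kappa> x a) (\<lambda>r. r)"
    and kappa_meas: "\<forall>C\<in>sets borel. (\<lambda>(x, a). measure (\<kappa> x a) C) \<in> borel_measurable borel"
    and R_cond: "\<forall>B\<in>sets (borel :: ('x \<times> real) measure). \<forall>C\<in>sets borel.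
        measure M {\<omega>\<in>space M. (X \<omega>, A \<omega>) \<in> B \<and> R \<omega> \<in> C}
          = (\<integral>\<omega>. indicator B (X \<omega>, A \<omega>) * measure (\<kappa> (X \<omega>) (A \<omega>)) C \<partial>M)"
    and [measurable]: "g \<in> borel_measurable borel"
    and int: "integrable M (\<lambda>\<omega>. R \<omega> * g (X \<omega>, A \<omega>))"
  shows "integrable M (\<lambda>\<omega>. rho \<kappa> (X \<omega>) (A \<omega>) * g (X \<omega>, A \<omega>))"
    and "(\<integral>\<omega>. R \<omega> * g (X \<omega>, A \<omega>) \<partial>M) = (\<integral>\<omega>. rho \<kappa> (X \<omega>) (A \<omega>) * g (X \<omega>, A \<omega>) \<partial>M)"
proof -
  interpret prob_space M by (rule M)
  define K where "K \<omega> = \<kappa> (X \<omega>) (A \<omega>)" for \<omega>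
  have XA[measurable]: "(\<lambda>\<omega>. (X \<omega>, A \<omega>)) \<in> borel_measurable M"
    unfolding borel_prod[symmetric] by measurable
  have K_prob: "prob_space (K \<omega>)" and "sets (K \<omega>) = sets borel" if "\<omega> \<in> space M" for \<omega>
    using kappa_prob X_in A_in that unfolding K_def by blast+
  moreover have measure_K[measurable]: "(\<lambda>\<omega>. measure (K \<omega>) C) \<in> borel_measurable M" if "C \<in> sets borel" for C
    using measurable_compose[OF XA kappa_meas[rule_format, OF that]] unfolding K_def by simp
  ultimately have K[measurable]: "K \<in> M \<rightarrow>\<^sub>M subprob_algebra borel"
    by (rule measurable_prob_kernel)
  have "emeasure M {\<omega>\<in>space M. (X \<omega>, A \<omega>) \<in> B \<and> R \<omega> \<in> C}
      = (\<integral>\<^sup>+\<omega>. indicator B (X \<omega>, A \<omega>) * emeasure (K \<omega>) C \<partial>M)"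
    if [measurable]: "B \<in> sets borel" "C \<in> sets borel" for B C
  proof -
    have "emeasure M {\<omega>\<in>space M. (X \<omega>, A \<omega>) \<in> B \<and> R \<omega> \<in> C}
        = ennreal (\<integral>\<omega>. indicator B (X \<omega>, A \<omega>) * measure (K \<omega>) C \<partial>M)"
      using R_cond that by (simp add: emeasure_eq_measure K_def)
    also have "\<dots> = (\<integral>\<^sup>+\<omega>. ennreal (indicator B (X \<omega>, A \<omega>) * measure (K \<omega>) C) \<partial>M)"
      using K_prob
      by (intro nn_integral_eq_integral[symmetric] integrable_const_bound[where B=1] AE_I2)
        (auto simp: indicator_def prob_space.prob_le_1)
    also have "\<dots> = (\<integral>\<^sup>+\<omega>. indicator B (X \<omega>, A \<omega>) * emeasure (K \<omega>) C \<partial>M)"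
      using K_prob by (intro nn_integral_cong) (simp add: indicator_def finite_measure.emeasure_eq_measure[OF prob_space.finite_measure])
    finally show ?thesis .
  qed
  moreover have "integrable (K \<omega>) (\<lambda>r. r)" if "\<omega> \<in> space M" for \<omega>
    using kappa_int X_in A_in that unfolding K_def by blast
  ultimately show "integrable M (\<lambda>\<omega>. rho \<kappa> (X \<omega>) (A \<omega>) * g (X \<omega>, A \<omega>))"
    and "(\<integral>\<omega>. R \<omega> * g (X \<omega>, A \<omega>) \<partial>M) = (\<integral>\<omega>. rho \<kappa> (X \<omega>) (A \<omega>) * g (X \<omega>, A \<omega>) \<partial>M)"
    using integral_disintegration[OF M XA _ K, of R g] int unfolding K_def rho_def by simp_all
qed

lemma integral_action_eq_propensity_sum:
  fixes M :: "'w measure" and X :: "'w \<Rightarrow> 'x::topological_space" and A :: "'w \<Rightarrow> real"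
    and As :: "real set" and q H :: "'x \<Rightarrow> real \<Rightarrow> real"
  assumes M: "prob_space M" and As: "finite As"
    and X_meas[measurable]: "X \<in> borel_measurable M" and A_meas[measurable]: "A \<in> borel_measurable M"
    and X_in: "\<forall>\<omega>\<in>space M. X \<omega> \<in> Xset" and A_in: "\<forall>\<omega>\<in>space M. A \<omega> \<in> As"
    and q_meas: "\<And>a. (\<lambda>x. q x a) \<in> borel_measurable borel"
    and q_nonneg: "\<forall>x\<in>Xset. \<forall>a\<in>As. 0 \<le> q x a" and q_sum: "\<forall>x\<in>Xset. (\<Sum>a\<in>As. q x a) = 1"
    and A_cond: "\<forall>B\<in>sets borel. \<forall>a\<in>As.
        measure M {\<omega>\<in>space M. X \<omega> \<in> B \<and> A \<omega> = a} = (\<integral>\<omega>. indicator B (X \<omega>) * q (X \<omega>) a \<partial>M)"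
    and H_meas: "\<And>a. a \<in> As \<Longrightarrow> (\<lambda>x. H x a) \<in> borel_measurable (restrict_space borel Xset)"
    and int: "integrable M (\<lambda>\<omega>. H (X \<omega>) (A \<omega>))"
  shows "(\<integral>\<omega>. H (X \<omega>) (A \<omega>) \<partial>M) = (\<integral>\<omega>. (\<Sum>a\<in>As. q (X \<omega>) a * H (X \<omega>) a) \<partial>M)"
proof -
  have [measurable]: "X \<in> M \<rightarrow>\<^sub>M restrict_space borel Xset"
    using X_in by (intro measurable_restrict_space2) auto
  have int_a: "integrable M (\<lambda>\<omega>. indicator {a} (A \<omega>) * H (X \<omega>) a)" if a: "a \<in> As" for a
  proof (rule Bochner_Integration.integrable_bound[OF int])
    note H_meas[OF a, measurable]
    show "(\<lambda>\<omega>. indicator {a} (A \<omega>) * H (X \<omega>) a) \<in> borel_measurable M"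
      by measurable
    show "AE \<omega> in M. norm (indicator {a} (A \<omega>) * H (X \<omega>) a) \<le> norm (H (X \<omega>) (A \<omega>))"
      by (intro AE_I2) (auto simp: indicator_def)
  qed
  have q_le_1: "q x a \<le> 1" if "x \<in> Xset" "a \<in> As" for x a
    using member_le_sum[of a As "q x"] As q_nonneg q_sum that by simp
  have propensity: "integrable M (\<lambda>\<omega>. q (X \<omega>) a * H (X \<omega>) a)"
    "(\<integral>\<omega>. indicator {a} (A \<omega>) * H (X \<omega>) a \<partial>M) = (\<integral>\<omega>. q (X \<omega>) a * H (X \<omega>) a \<partial>M)"
    if a: "a \<in> As" for a
    by (rule integral_indicator_action_eq_propensity[OF M X_meas A_meas _ q_meas _ _ _ H_meas[OF a] int_a[OF a]];
        simp add: X_in q_nonneg q_le_1 A_cond a)+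
  have "(\<integral>\<omega>. H (X \<omega>) (A \<omega>) \<partial>M) = (\<integral>\<omega>. (\<Sum>a\<in>As. indicator {a} (A \<omega>) * H (X \<omega>) a) \<partial>M)"
    using A_in As by (intro Bochner_Integration.integral_cong) (simp_all add: indicator_def)
  also have "\<dots> = (\<Sum>a\<in>As. \<integral>\<omega>. indicator {a} (A \<omega>) * H (X \<omega>) a \<partial>M)"
    by (rule Bochner_Integration.integral_sum) (rule int_a)
  also have "\<dots> = (\<Sum>a\<in>As. \<integral>\<omega>. q (X \<omega>) a * H (X \<omega>) a \<partial>M)"
    by (rule sum.cong) (simp_all add: propensity(2))
  also have "\<dots> = (\<integral>\<omega>. (\<Sum>a\<in>As. q (X \<omega>) a * H (X \<omega>) a) \<partial>M)"
    by (rule Bochner_Integration.integral_sum[symmetric]) (rule propensity(1))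
  finally show ?thesis .
qed

lemma integral_reward_times_action_weight:
  fixes M :: "'w measure" and X :: "'w \<Rightarrow> 'x::second_countable_topology" and A R :: "'w \<Rightarrow> real"
    and As :: "real set" and q c :: "'x \<Rightarrow> real \<Rightarrow> real" and \<kappa> :: "'x \<Rightarrow> real \<Rightarrow> real measure"
  assumes M: "prob_space M" and As: "finite As"
    and X_meas[measurable]: "X \<in> borel_measurable M" and A_meas[measurable]: "A \<in> borel_measurable M"
    and R_meas[measurable]: "R \<in> borel_measurable M"
    and X_in: "\<forall>\<omega>\<in>space M. X \<omega> \<in> Xset" and A_in: "\<forall>\<omega>\<in>space M. A \<omega> \<in> As"
    and q_meas: "\<And>a. (\<lambda>x. q x a) \<in> borel_measurable borel"
    and q_nonneg: "\<forall>x\<in>Xset. \<forall>a\<in>As. 0 \<le> q x a" and q_sum: "\<forall>x\<in>Xset. (\<Sum>a\<in>As. q x a) = 1"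
    and A_cond: "\<forall>B\<in>sets borel. \<forall>a\<in>As.
        measure M {\<omega>\<in>space M. X \<omega> \<in> B \<and> A \<omega> = a} = (\<integral>\<omega>. indicator B (X \<omega>) * q (X \<omega>) a \<partial>M)"
    and kappa_prob: "\<forall>x\<in>Xset. \<forall>a\<in>As. prob_space (\<kappa> x a) \<and> sets (\<kappa> x a) = sets borel"
    and kappa_int: "\<forall>x\<in>Xset. \<forall>a\<in>As. integrable (\<kappa> x a) (\<lambda>r. r)"
    and kappa_meas: "\<forall>C\<in>sets borel. (\<lambda>(x, a). measure (\<kappa> x a) C) \<in> borel_measurable borel"
    and R_cond: "\<forall>B\<in>sets (borel :: ('x \<times> real) measure). \<forall>C\<in>sets borel.
        measure M {\<omega>\<in>space M. (X \<omega>, A \<omega>) \<in> B \<and> R \<omega> \<in> C}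
          = (\<integral>\<omega>. indicator B (X \<omega>, A \<omega>) * measure (\<kappa> (X \<omega>) (A \<omega>)) C \<partial>M)"
    and c_meas[measurable]: "\<And>a. (\<lambda>x. c x a) \<in> borel_measurable borel"
    and int: "integrable M (\<lambda>\<omega>. R \<omega> * c (X \<omega>) (A \<omega>))"
  shows "(\<integral>\<omega>. R \<omega> * c (X \<omega>) (A \<omega>) \<partial>M) = (\<integral>\<omega>. (\<Sum>a\<in>As. q (X \<omega>) a * (rho \<kappa> (X \<omega>) a * c (X \<omega>) a)) \<partial>M)"
proof -
  \<comment> \<open>\<open>c\<close> need not be jointly measurable; \<open>g\<close> is, and agrees with \<open>c\<close> on \<open>As\<close>.\<close>
  define g where "g z = (\<Sum>a\<in>As. if snd z = a then c (fst z) a else 0)" for z :: "'x \<times> real"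
  have g_meas[measurable]: "g \<in> borel_measurable borel"
    unfolding g_def borel_prod[symmetric] by measurable
  have g: "g (x, a) = c x a" if "a \<in> As" for x a
    using that As by (simp add: g_def)
  have "integrable M (\<lambda>\<omega>. R \<omega> * g (X \<omega>, A \<omega>))"
    by (rule Bochner_Integration.integrable_cong[THEN iffD1, OF refl _ int]) (simp add: g A_in)
  note rho = integral_reward_eq_integral_rho[OF M X_meas A_meas R_meas X_in A_in
      kappa_prob kappa_int kappa_meas R_cond g_meas this]
  have rho_c_meas: "(\<lambda>x. rho \<kappa> x a * c x a) \<in> borel_measurable (restrict_space borel Xset)"
    if "a \<in> As" for a
  proof -
    have "(\<lambda>x. rho \<kappa> x a) \<in> borel_measurable (restrict_space borel Xset)"
      using borel_measurable_rho_restrict_space[OF kappa_prob kappa_meas, of "\<lambda>_. a"] that by simp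
    moreover have "(\<lambda>x. c x a) \<in> borel_measurable (restrict_space borel Xset)"
      by (rule measurable_restrict_space1) simp
    ultimately show ?thesis by (rule borel_measurable_times)
  qed
  have "integrable M (\<lambda>\<omega>. rho \<kappa> (X \<omega>) (A \<omega>) * c (X \<omega>) (A \<omega>))"
    using rho(1) by (rule Bochner_Integration.integrable_cong[THEN iffD1, OF refl, rotated]) (simp add: g A_in)
  note marginal = integral_action_eq_propensity_sum[OF M As X_meas A_meas X_in A_in q_meas q_nonneg q_sum A_cond
      rho_c_meas this]
  have "(\<integral>\<omega>. R \<omega> * c (X \<omega>) (A \<omega>) \<partial>M) = (\<integral>\<omega>. R \<omega> * g (X \<omega>, A \<omega>) \<partial>M)"
    by (intro Bochner_Integration.integral_cong) (simp_all add: g A_in)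
  also have "\<dots> = (\<integral>\<omega>. rho \<kappa> (X \<omega>) (A \<omega>) * g (X \<omega>, A \<omega>) \<partial>M)"
    by (rule rho(2))
  also have "\<dots> = (\<integral>\<omega>. rho \<kappa> (X \<omega>) (A \<omega>) * c (X \<omega>) (A \<omega>) \<partial>M)"
    by (intro Bochner_Integration.integral_cong) (simp_all add: g A_in)
  finally show ?thesis
    using marginal by simp
qed

lemma borel_measurable_onehot [measurable (raw)]:
  fixes act :: "'d::finite \<Rightarrow> real"
  assumes [measurable]: "F \<in> borel_measurable N"
  shows "(\<lambda>x. onehot act (F x)) \<in> borel_measurable N"
  unfolding onehot_def by (intro borel_measurable_vec_lambda) simp

lemma onehot_eq_axis:
  assumes "inj act"
  shows "onehot act (act k) = axis k 1"
  using assms unfolding onehot_def axis_def by (auto simp: vec_eq_iff inj_eq)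

lemma sum_propensity_kernel_weight_eq:
  fixes act :: "'d::finite \<Rightarrow> real" and abar :: "'m::finite \<Rightarrow> real"
    and f :: "real \<Rightarrow> real^'k::finite" and W :: "real^'d^'d" and \<rho> p :: "real \<Rightarrow> real"
  assumes act_inj: "inj act" and abar_inj: "inj abar"
    and W: "sym_posdef W" and D_rank: "rank (design f act) = CARD('k)"
    and linear: "\<exists>\<beta>. \<forall>a\<in>range act \<union> range abar. \<rho> a = f a \<bullet> \<beta>"
    and b: "b \<in> range abar" and p_pos: "\<forall>a\<in>range act. 0 < p a"
  shows "(\<Sum>a\<in>range act. p a * (\<rho> a * (onehot act a \<bullet> (Kmat W (design f act) (design f abar) *v onehot abar b) / p a)))
    = \<rho> b"
proof -
  let ?K = "Kmat W (design f act) (design f abar)"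
  obtain \<beta> where \<beta>: "\<forall>a\<in>range act \<union> range abar. \<rho> a = f a \<bullet> \<beta>" using linear by blast
  obtain j where j: "b = abar j" using b by blast
  have "(\<Sum>a\<in>range act. p a * (\<rho> a * (onehot act a \<bullet> (?K *v onehot abar b) / p a)))
      = (\<Sum>a\<in>range act. \<rho> a * (onehot act a \<bullet> (?K *v onehot abar b)))"
  proof (rule sum.cong)
    fix a assume "a \<in> range act"
    then have "0 < p a" using p_pos by blast
    then show "p a * (\<rho> a * (onehot act a \<bullet> (?K *v onehot abar b) / p a))
        = \<rho> a * (onehot act a \<bullet> (?K *v onehot abar b))"
      by simp
  qed simp
  also have "\<dots> = (\<Sum>k\<in>UNIV. (design f act *v \<beta>) $ k * ?K $ k $ j)"
    using act_inj \<beta>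
    by (simp add: sum.reindex j onehot_eq_axis[OF act_inj] onehot_eq_axis[OF abar_inj] inner_axis' inner_axis
        matrix_vector_mul_component design_def)
  also have "\<dots> = ((design f act *v \<beta>) v* ?K) $ j"
    by (simp add: vector_matrix_mult_def)
  also have "\<dots> = (design f abar *v \<beta>) $ j"
    by (simp only: Kmat_reproduces_design[OF W D_rank])
  also have "\<dots> = \<rho> b"
    using \<beta> by (simp add: j matrix_vector_mul_component design_def)
  finally show ?thesis .
qed

lemma kernelized_ips_term_unbiased:
  fixes M :: "'w measure" and Xset :: "(real^'p) set"
    and act :: "'d::finite \<Rightarrow> real" and abar :: "'m::finite \<Rightarrow> real" and f :: "real \<Rightarrow> real^'k::finite"
    and X X0 :: "'w \<Rightarrow> real^'p" and A R :: "'w \<Rightarrow> real" and pt :: "real^'p \<Rightarrow> real \<Rightarrow> real"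
    and \<kappa> :: "real^'p \<Rightarrow> real \<Rightarrow> real measure" and W :: "real^'p \<Rightarrow> real^'d^'d" and pibar :: "real^'p \<Rightarrow> real"
  assumes M: "prob_space M"
    and act_inj: "inj act" and abar_inj: "inj abar"
    and D_rank: "rank (design f act) = CARD('k)"
    and X_meas[measurable]: "X \<in> borel_measurable M" and A_meas[measurable]: "A \<in> borel_measurable M"
    and R_meas[measurable]: "R \<in> borel_measurable M" and X0_meas[measurable]: "X0 \<in> borel_measurable M"
    and X_in: "\<forall>\<omega>\<in>space M. X \<omega> \<in> Xset" and X0_in: "\<forall>\<omega>\<in>space M. X0 \<omega> \<in> Xset"
    and A_in: "\<forall>\<omega>\<in>space M. A \<omega> \<in> range act"
    and X_ident: "distr M borel X = distr M borel X0"
    and pt_meas[measurable]: "\<forall>a. (\<lambda>x. pt x a) \<in> borel_measurable borel"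
    and pt_pos: "\<forall>x\<in>Xset. \<forall>a\<in>range act. pt x a > 0"
    and pt_sum: "\<forall>x\<in>Xset. (\<Sum>k\<in>UNIV. pt x (act k)) = 1"
    and A_cond: "\<forall>B\<in>sets borel. \<forall>a\<in>range act.
        measure M {\<omega>\<in>space M. X \<omega> \<in> B \<and> A \<omega> = a} = (\<integral>\<omega>. indicator B (X \<omega>) * pt (X \<omega>) a \<partial>M)"
    and kappa_prob: "\<forall>x\<in>Xset. \<forall>a\<in>range act \<union> range abar. prob_space (\<kappa> x a) \<and> sets (\<kappa> x a) = sets borel"
    and kappa_int: "\<forall>x\<in>Xset. \<forall>a\<in>range act \<union> range abar. integrable (\<kappa> x a) (\<lambda>r. r)"
    and kappa_meas: "\<forall>C\<in>sets borel. (\<lambda>(x, a). measure (\<kappa> x a) C) \<in> borel_measurable borel"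
    and R_cond: "\<forall>B\<in>sets (borel :: ((real^'p) \<times> real) measure). \<forall>C\<in>sets borel.
        measure M {\<omega>\<in>space M. (X \<omega>, A \<omega>) \<in> B \<and> R \<omega> \<in> C}
          = (\<integral>\<omega>. indicator B (X \<omega>, A \<omega>) * measure (\<kappa> (X \<omega>) (A \<omega>)) C \<partial>M)"
    and regression: "\<forall>x\<in>Xset. \<exists>\<beta>. \<forall>a\<in>range act \<union> range abar. rho \<kappa> x a = f a \<bullet> \<beta>"
    and W_spd: "\<forall>x\<in>Xset. sym_posdef (W x)" and W_meas[measurable]: "W \<in> borel_measurable borel"
    and pibar_in: "\<forall>x\<in>Xset. pibar x \<in> range abar" and pibar_meas[measurable]: "pibar \<in> borel_measurable borel"
    and term_int: "integrable M (\<lambda>\<omega>. R \<omega> *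
        (onehot act (A \<omega>) \<bullet> (Kmat (W (X \<omega>)) (design f act) (design f abar) *v onehot abar (pibar (X \<omega>))))
        / pt (X \<omega>) (A \<omega>))"
  shows "(\<integral>\<omega>. R \<omega> *
        (onehot act (A \<omega>) \<bullet> (Kmat (W (X \<omega>)) (design f act) (design f abar) *v onehot abar (pibar (X \<omega>))))
        / pt (X \<omega>) (A \<omega>) \<partial>M)
     = (\<integral>\<omega>. rho \<kappa> (X0 \<omega>) (pibar (X0 \<omega>)) \<partial>M)"
proof -
  define D Dbar where "D = design f act" and "Dbar = design f abar"
  define weight where "weight x a = onehot act a \<bullet>
    (W x ** D ** cramer_inv (transpose D ** W x ** D) ** transpose Dbar *v onehot abar (pibar x)) / pt x a" for x a
  have weight_Kmat: "weight x a = onehot act a \<bullet> (Kmat (W x) D Dbar *v onehot abar (pibar x)) / pt x a"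
    if "x \<in> Xset" for x a
    using W_spd D_rank that unfolding weight_def D_def by (simp add: Kmat_eq_cramer_inv)
  have [measurable]: "(\<lambda>x. pt x a) \<in> borel_measurable borel" for a
    using pt_meas by blast
  have weight_meas: "(\<lambda>x. weight x a) \<in> borel_measurable borel" for a
    unfolding weight_def by measurable
  have term_eq: "R \<omega> * (onehot act (A \<omega>) \<bullet> (Kmat (W (X \<omega>)) D Dbar *v onehot abar (pibar (X \<omega>)))) / pt (X \<omega>) (A \<omega>)
      = R \<omega> * weight (X \<omega>) (A \<omega>)" if "\<omega> \<in> space M" for \<omega>
    using X_in that by (simp add: weight_Kmat)
  have "(\<integral>\<omega>. R \<omega> * (onehot act (A \<omega>) \<bullet> (Kmat (W (X \<omega>)) D Dbar *v onehot abar (pibar (X \<omega>)))) / pt (X \<omega>) (A \<omega>) \<partial>M)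
      = (\<integral>\<omega>. R \<omega> * weight (X \<omega>) (A \<omega>) \<partial>M)"
    by (intro Bochner_Integration.integral_cong) (simp_all add: term_eq)
  also have "\<dots> = (\<integral>\<omega>. (\<Sum>a\<in>range act. pt (X \<omega>) a * (rho \<kappa> (X \<omega>) a * weight (X \<omega>) a)) \<partial>M)"
  proof (rule integral_reward_times_action_weight[OF M _ X_meas A_meas R_meas X_in A_in _ _ _ A_cond _ _
        kappa_meas R_cond weight_meas])
    show "\<forall>x\<in>Xset. (\<Sum>a\<in>range act. pt x a) = 1"
      using pt_sum act_inj by (simp add: sum.reindex)
    show "integrable M (\<lambda>\<omega>. R \<omega> * weight (X \<omega>) (A \<omega>))"
      using term_int[folded D_def Dbar_def]
      by (rule Bochner_Integration.integrable_cong[THEN iffD1, OF refl, rotated]) (simp add: term_eq)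
  qed (use pt_pos kappa_prob kappa_int in \<open>auto simp: less_imp_le\<close>)
  also have "\<dots> = (\<integral>\<omega>. rho \<kappa> (X \<omega>) (pibar (X \<omega>)) \<partial>M)"
  proof (intro Bochner_Integration.integral_cong refl)
    fix \<omega> assume "\<omega> \<in> space M"
    then have x: "X \<omega> \<in> Xset" using X_in by blast
    show "(\<Sum>a\<in>range act. pt (X \<omega>) a * (rho \<kappa> (X \<omega>) a * weight (X \<omega>) a)) = rho \<kappa> (X \<omega>) (pibar (X \<omega>))"
      unfolding weight_Kmat[OF x] D_def Dbar_def using x W_spd regression pibar_in pt_pos
      by (intro sum_propensity_kernel_weight_eq[OF act_inj abar_inj _ D_rank]) auto
  qed
  also have "\<dots> = (\<integral>\<omega>. rho \<kappa> (X0 \<omega>) (pibar (X0 \<omega>)) \<partial>M)"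
    using X_in X0_in X_ident borel_measurable_rho_restrict_space[OF kappa_prob kappa_meas pibar_meas]
    by (intro integral_comp_eq_if_distr_eq) (auto simp: pibar_in)
  finally show ?thesis by (simp add: D_def Dbar_def)
qed

theorem proposition2:
  fixes M :: "'w measure"
    and Xset :: "(real^'p) set"
    and act :: "'d::finite \<Rightarrow> real" and abar :: "'m::finite \<Rightarrow> real"
    and f :: "real \<Rightarrow> real^'k::finite" and k0 :: 'k
    and n :: nat
    and X :: "nat \<Rightarrow> 'w \<Rightarrow> real^'p" and A :: "nat \<Rightarrow> 'w \<Rightarrow> real" and R :: "nat \<Rightarrow> 'w \<Rightarrow> real"
    and X0 :: "'w \<Rightarrow> real^'p"
    and pt :: "nat \<Rightarrow> real^'p \<Rightarrow> real \<Rightarrow> real"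
    and \<kappa> :: "real^'p \<Rightarrow> real \<Rightarrow> real measure"
    and W :: "nat \<Rightarrow> real^'p \<Rightarrow> real^'d^'d"
    and pibar :: "real^'p \<Rightarrow> real"
  assumes M: "prob_space M"
    and n: "n > 0"
    and act_inj: "inj act" and abar_inj: "inj abar"
    \<comment> \<open>f(a) = (1, f_1(a), ..., f_q(a)): the coordinate k0 is the constant 1\<close>
    and f_const: "\<forall>a. f a $ k0 = 1"
    and D_rank: "rank (design f act) = CARD('k)"
    \<comment> \<open>random variables\<close>
    and X_meas: "\<forall>i\<in>{1..n}. X i \<in> borel_measurable M"
    and A_meas: "\<forall>i\<in>{1..n}. A i \<in> borel_measurable M"
    and R_meas: "\<forall>i\<in>{1..n}. R i \<in> borel_measurable M"
    and X0_meas: "X0 \<in> borel_measurable M"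
    and X_in: "\<forall>i\<in>{1..n}. \<forall>\<omega>\<in>space M. X i \<omega> \<in> Xset"
    and X0_in: "\<forall>\<omega>\<in>space M. X0 \<omega> \<in> Xset"
    and A_in: "\<forall>i\<in>{1..n}. \<forall>\<omega>\<in>space M. A i \<omega> \<in> range act"
    \<comment> \<open>(i) independence of the tuples\<close>
    and indep: "prob_space.indep_vars M (\<lambda>_. borel) (\<lambda>i \<omega>. (X i \<omega>, A i \<omega>, R i \<omega>)) {1..n}"
    \<comment> \<open>(ii) X_1, ..., X_n identically distributed as the generic X0\<close>
    and X_ident: "\<forall>i\<in>{1..n}. distr M borel (X i) = distr M borel X0"
    \<comment> \<open>(iii) logging policies: conditional distribution of A_i given X_i\<close>
    and pt_meas: "\<forall>i\<in>{1..n}. \<forall>a. (\<lambda>x. pt i x a) \<in> borel_measurable borel"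
    and pt_pos: "\<forall>i\<in>{1..n}. \<forall>x\<in>Xset. \<forall>a\<in>range act. pt i x a > 0"
    and pt_sum: "\<forall>i\<in>{1..n}. \<forall>x\<in>Xset. (\<Sum>k\<in>UNIV. pt i x (act k)) = 1"
    and A_cond: "\<forall>i\<in>{1..n}. \<forall>B\<in>sets borel. \<forall>a\<in>range act.
        measure M {\<omega>\<in>space M. X i \<omega> \<in> B \<and> A i \<omega> = a}
          = (\<integral>\<omega>. indicator B (X i \<omega>) * pt i (X i \<omega>) a \<partial>M)"
    \<comment> \<open>(iv) conditional reward distribution kappa x a, the same for all i\<close>
    and kappa_prob: "\<forall>x\<in>Xset. \<forall>a\<in>range act \<union> range abar. prob_space (\<kappa> x a) \<and> sets (\<kappa> x a) = sets borel"
    and kappa_int: "\<forall>x\<in>Xset. \<forall>a\<in>range act \<union> range abar. integrable (\<kappa> x a) (\<lambda>r. r)"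
    and kappa_meas: "\<forall>C\<in>sets borel. (\<lambda>(x, a). measure (\<kappa> x a) C) \<in> borel_measurable borel"
    and R_cond: "\<forall>i\<in>{1..n}. \<forall>B\<in>sets (borel :: ((real^'p) \<times> real) measure). \<forall>C\<in>sets borel.
        measure M {\<omega>\<in>space M. (X i \<omega>, A i \<omega>) \<in> B \<and> R i \<omega> \<in> C}
          = (\<integral>\<omega>. indicator B (X i \<omega>, A i \<omega>) * measure (\<kappa> (X i \<omega>) (A i \<omega>)) C \<partial>M)"
    \<comment> \<open>regression assumption\<close>
    and regression: "\<forall>x\<in>Xset. \<exists>\<beta>. \<forall>a\<in>range act \<union> range abar. rho \<kappa> x a = f a \<bullet> \<beta>"
    \<comment> \<open>weight matrices\<close>
    and W_spd: "\<forall>i\<in>{1..n}. \<forall>x\<in>Xset. sym_posdef (W i x)"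
    and W_meas: "\<forall>i\<in>{1..n}. W i \<in> borel_measurable borel"
    \<comment> \<open>deterministic target policy with values in the new action set\<close>
    and pibar_in: "\<forall>x\<in>Xset. pibar x \<in> range abar"
    and pibar_meas: "pibar \<in> borel_measurable borel"
    \<comment> \<open>all expectations appearing are finite\<close>
    and R_int: "\<forall>i\<in>{1..n}. integrable M (R i)"
    and term_int: "\<forall>i\<in>{1..n}. integrable M (\<lambda>\<omega>. R i \<omega> *
        (onehot act (A i \<omega>) \<bullet> (Kmat (W i (X i \<omega>)) (design f act) (design f abar) *v onehot abar (pibar (X i \<omega>))))
        / pt i (X i \<omega>) (A i \<omega>))"
    and V_int: "integrable M (\<lambda>\<omega>. rho \<kappa> (X0 \<omega>) (pibar (X0 \<omega>)))"
  shows "(\<integral>\<omega>. (1 / real n) * (\<Sum>i=1..n. R i \<omega> *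
        (onehot act (A i \<omega>) \<bullet> (Kmat (W i (X i \<omega>)) (design f act) (design f abar) *v onehot abar (pibar (X i \<omega>))))
        / pt i (X i \<omega>) (A i \<omega>)) \<partial>M)
     = (\<integral>\<omega>. rho \<kappa> (X0 \<omega>) (pibar (X0 \<omega>)) \<partial>M)"
proof -
  \<comment> \<open>Neither the independence of the samples nor the constant coordinate \<open>k0\<close> of \<open>f\<close> is needed:
    each term is unbiased on its own, and the average inherits this by linearity.\<close>
  define T where "T i \<omega> = R i \<omega> *
    (onehot act (A i \<omega>) \<bullet> (Kmat (W i (X i \<omega>)) (design f act) (design f abar) *v onehot abar (pibar (X i \<omega>))))
    / pt i (X i \<omega>) (A i \<omega>)" for i \<omega>
  define V where "V = (\<integral>\<omega>. rho \<kappa> (X0 \<omega>) (pibar (X0 \<omega>)) \<partial>M)"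
  have term_unbiased: "(\<integral>\<omega>. T i \<omega> \<partial>M) = V" if i: "i \<in> {1..n}" for i
    unfolding T_def V_def
    by (rule kernelized_ips_term_unbiased[OF M act_inj abar_inj D_rank];
        use i X_meas A_meas R_meas X0_meas X_in X0_in A_in X_ident pt_meas pt_pos pt_sum A_cond
          kappa_prob kappa_int kappa_meas R_cond regression W_spd W_meas pibar_in pibar_meas term_int
          in simp)
  have "(\<integral>\<omega>. (1 / real n) * (\<Sum>i=1..n. T i \<omega>) \<partial>M) = (1 / real n) * (\<Sum>i=1..n. \<integral>\<omega>. T i \<omega> \<partial>M)"
    using term_int by (simp add: T_def Bochner_Integration.integral_sum)
  also have "\<dots> = V"
    using n by (simp add: term_unbiased)
  finally show ?thesis by (simp add: T_def V_def)
qed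

end
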